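(* Under the standing setup with Assumptions 1 and 2, let $\mathcal C_0=\{c\in\mathcal C: w\mapsto w-c(w,z)\text{ is increasing for all }z\in\mathsf Z\}$. Then $\mathcal C_0$ is a closed subset of $(\mathcal C,\rho)$ and $Tc\in\mathcal C_0$ for all $c\in\mathcal C_0$.
   Context: Standing setup. $\mathsf Z$ finite, $\{Z_t\}$ a time-homogeneous Markov chain on $\mathsf Z$ with transition probabilities $P(z,\hat z)$; $\{\epsilon_t\}_{t\ge1}$ i.i.d. with distribution $\pi$, independent of $\{Z_t\}$; for nonnegative measurable $\beta,R,Y$, $\beta_t=\beta(Z_{t-1},Z_t,\epsilon_t)$, $R_t=R(Z_{t-1},Z_t,\epsilon_t)$, $Y_t=Y(Z_{t-1},Z_t,\epsilon_t)$. $u:(0,\infty)\times\mathsf Z\to\mathbb R$ with derivative $u'(c,z)$ in $c$. $\mathbb E_z$: expectation given $Z_0=z$; under $\mathbb E_z$, $\hat Z=Z_1$, $\hat\beta=\beta(z,\hat Z,\epsilon_1)$, $\hat R=R(z,\hat Z,\epsilon_1)$, $\hat Y=Y(z,\hat Z,\epsilon_1)$. $S_0=(0,\infty)\times\mathsf Z$. Assumption 1: for every $z$, $u(\cdot,z)$ twice differentiable on $(0,\infty)$, $u'>0$, $u''<0$, $u'(c,z)\to\infty$ as $c\to0$, $\lim_{c\to\infty}u'(c,z)<1$. Assumption 2: (a) $\mathbb E_zu'(\hat Y,\hat Z)<\infty$ and $\mathbb E_z\hat\beta\hat Ru'(\hat Y,\hat Z)<\infty$ for all $z$; (b) $r(K(1))<1$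 ($r$ = spectral radius), where $K_{z\hat z}(\theta)=P(z,\hat z)\int\beta(z,\hat z,\epsilon)R(z,\hat z,\epsilon)^\theta\pi(d\epsilon)$. $\mathcal C$: continuous $c:S_0\to\mathbb R_+$, increasing in $w$, $0<c(w,z)\le w$, with $\sup_{S_0}|u'(c(w,z),z)-u'(w,z)|<\infty$; $\rho(c_1,c_2)=\sup_{S_0}|u'(c_1(w,z),z)-u'(c_2(w,z),z)|$. $T$: $Tc(w,z)$ is the unique $\xi\in(0,w]$ with $u'(\xi,z)=\max\{\mathbb E_z\hat\beta\hat Ru'(c(\hat R(w-\xi)+\hat Y,\hat Z),\hat Z),u'(w,z)\}$. *)

theory Defs
  imports "HOL-Probability.Probability"
begin

definition spec_radius :: "real^'n^'n \<Rightarrow> real" where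
  "spec_radius A = Max {cmod l | l. \<exists>v::complex^'n. v \<noteq> 0 \<and>
       (\<chi> i j. complex_of_real (A $ i $ j)) *v v = (\<chi> i. l * v $ i)}"

text \<open>Conditional expectation E_z f(Z_1, eps_1) given Z_0 = z:
  sum over the next state weighted by P, integral over eps w.r.t. Pe.\<close>
definition Ez :: "('z::finite \<Rightarrow> 'z \<Rightarrow> real) \<Rightarrow> 'e measure \<Rightarrow> 'z \<Rightarrow> ('z \<Rightarrow> 'e \<Rightarrow> real) \<Rightarrow> real" where
  "Ez P Pe z f = (\<Sum>zh\<in>UNIV. P z zh * (\<integral>e. f zh e \<partial>Pe))"

text \<open>The class C (functions c(w,z), only their values on S_0 = (0,inf) x Z matter).\<close>
definition classC :: "(real \<Rightarrow> 'z \<Rightarrow> real) \<Rightarrow> (real \<Rightarrow> 'z \<Rightarrow> real) set" where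
  "classC du = {c. (\<forall>z. continuous_on {0<..} (\<lambda>w. c w z))
      \<and> (\<forall>z. mono_on {0<..} (\<lambda>w. c w z))
      \<and> (\<forall>w z. 0 < w \<longrightarrow> 0 < c w z \<and> c w z \<le> w)
      \<and> (\<exists>M. \<forall>w z. 0 < w \<longrightarrow> \<bar>du (c w z) z - du w z\<bar> \<le> M)}"

definition rho :: "(real \<Rightarrow> 'z \<Rightarrow> real) \<Rightarrow> (real \<Rightarrow> 'z \<Rightarrow> real) \<Rightarrow> (real \<Rightarrow> 'z \<Rightarrow> real) \<Rightarrow> real" where
  "rho du c1 c2 = (SUP p\<in>{0<..} \<times> UNIV. \<bar>du (c1 (fst p) (snd p)) (snd p) - du (c2 (fst p) (snd p)) (snd p)\<bar>)"

definition classC0 :: "(real \<Rightarrow> 'z \<Rightarrow> real) \<Rightarrow> (real \<Rightarrow> 'z \<Rightarrow> real) set" where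
  "classC0 du = {c \<in> classC du. \<forall>z. mono_on {0<..} (\<lambda>w. w - c w z)}"

definition Top :: "('z::finite \<Rightarrow> 'z \<Rightarrow> real) \<Rightarrow> 'e measure \<Rightarrow>
    ('z \<Rightarrow> 'z \<Rightarrow> 'e \<Rightarrow> real) \<Rightarrow> ('z \<Rightarrow> 'z \<Rightarrow> 'e \<Rightarrow> real) \<Rightarrow> ('z \<Rightarrow> 'z \<Rightarrow> 'e \<Rightarrow> real) \<Rightarrow>
    (real \<Rightarrow> 'z \<Rightarrow> real) \<Rightarrow> (real \<Rightarrow> 'z \<Rightarrow> real) \<Rightarrow> real \<Rightarrow> 'z \<Rightarrow> real" where
  "Top P Pe beta R Y du c = (\<lambda>w z. THE \<xi>. 0 < \<xi> \<and> \<xi> \<le> w \<and>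
      du \<xi> z = max (Ez P Pe z (\<lambda>zh e. beta z zh e * R z zh e *
                        du (c (R z zh e * (w - \<xi>) + Y z zh e) zh) zh))
                    (du w z))"

end

theory Submission
  imports Defs
begin

(* Closedness: if rho(c', c) is small, then u'(c'(w,z),z) is uniformly close to u'(c(w,z),z); as
   u'(.,z) is strictly decreasing, rho-convergence forces pointwise convergence of c(w,z), and
   monotonicity of w - c(w,z) survives pointwise limits.

   Invariance: for fixed z the expected discounted marginal utility of savings s,
   G(s) = E_z beta R u'(c(R s + Y, Z), Z), is decreasing and continuous in s (dominated convergence,
   with the integrand at s = 0 as dominating function). Hence Tc(w,z) is the unique zero xi in (0,w]
   of u'(xi) - max(G(w - xi), u'(w)), and comparing these equations at w1 <= w2 shows that neither
   consumption xi nor savings w - xi can decrease. So Tc and w - Tc are increasing, Tc is 1-Lipschitz,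
   and u'(w) <= u'(Tc w) <= max(G(0), u'(w)) gives the bound required in the class C. *)

lemma deriv_neg_imp_strict_antimono_on:
  fixes f f' :: "real \<Rightarrow> real"
  assumes "\<And>x. a < x \<Longrightarrow> (f has_real_derivative f' x) (at x)" "\<And>x. a < x \<Longrightarrow> f' x < 0"
  shows "strict_antimono_on {a<..} f"
proof (rule monotone_onI)
  fix x y assume "x \<in> {a<..}" "y \<in> {a<..}" "x < y"
  show "f y < f x"
  proof (rule DERIV_neg_imp_decreasing[OF \<open>x < y\<close>])
    fix v assume "x \<le> v"
    then have "a < v" using \<open>x \<in> {a<..}\<close> by simp
    then show "\<exists>d. (f has_real_derivative d) (at v) \<and> d < 0" using assms by blast
  qed
qed

lemma strict_antimono_on_tendsto_imp_tendsto:
  fixes f :: "real \<Rightarrow> real"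
  assumes f: "strict_antimono_on S f" and "open S" "t \<in> S" "\<And>n. s n \<in> S"
    and lim: "(\<lambda>n. f (s n)) \<longlonglongrightarrow> f t"
  shows "s \<longlonglongrightarrow> t"
proof -
  obtain r where r: "r > 0" "ball t r \<subseteq> S"
    using \<open>open S\<close> \<open>t \<in> S\<close> open_contains_ball by blast
  have less_if_f_less: "f a < f b \<Longrightarrow> a \<in> S \<Longrightarrow> b \<in> S \<Longrightarrow> b < a" for a b
    using monotone_onD[OF f, of a b] monotone_onD[OF f, of b a] by (cases a b rule: linorder_cases) auto
  show ?thesis
  proof (rule order_tendstoI)
    fix a assume "a < t"
    define a' where "a' = max a (t - r / 2)"
    have a': "a \<le> a'" "a' < t" "a' \<in> S"
      using \<open>a < t\<close> r by (auto simp: a'_def dist_real_def intro!: subsetD[OF r(2)])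
    then have "f t < f a'"
      using monotone_onD[OF f] \<open>t \<in> S\<close> by blast
    with lim have "eventually (\<lambda>n. f (s n) < f a') sequentially"
      by (rule order_tendstoD)
    then show "eventually (\<lambda>n. a < s n) sequentially"
      by eventually_elim (use a' less_if_f_less assms(4) in force)
  next
    fix b assume "t < b"
    define b' where "b' = min b (t + r / 2)"
    have b': "b' \<le> b" "t < b'" "b' \<in> S"
      using \<open>t < b\<close> r by (auto simp: b'_def dist_real_def intro!: subsetD[OF r(2)])
    then have "f b' < f t"
      using monotone_onD[OF f] \<open>t \<in> S\<close> by blast
    with lim have "eventually (\<lambda>n. f b' < f (s n)) sequentially"
      by (rule order_tendstoD)
    then show "eventually (\<lambda>n. s n < b) sequentially"
      by eventually_elim (use b' less_if_f_less assms(4) in force)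
  qed
qed

lemma mono_on_pointwise_limit:
  fixes g :: "nat \<Rightarrow> 'a::order \<Rightarrow> 'b::linorder_topology"
  assumes "\<And>n. mono_on S (g n)" "\<And>x. x \<in> S \<Longrightarrow> (\<lambda>n. g n x) \<longlonglongrightarrow> f x"
  shows "mono_on S f"
proof (rule mono_onI)
  fix x y assume "x \<in> S" "y \<in> S" "x \<le> y"
  then show "f x \<le> f y"
    using assms by (intro LIMSEQ_le[of "\<lambda>n. g n x" _ "\<lambda>n. g n y"]) (auto dest: mono_onD)
qed

lemma borel_measurable_continuous_on_pos_compose:
  fixes \<phi> :: "real \<Rightarrow> real"
  assumes "continuous_on {0<..} \<phi>" "h \<in> borel_measurable M" "\<And>x. x \<in> space M \<Longrightarrow> 0 \<le> h x"
  shows "(\<lambda>x. \<phi> (h x)) \<in> borel_measurable M"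
proof -
  define \<psi> where "\<psi> t = (if t \<in> {0<..} then \<phi> t else \<phi> 0)" for t
  have "\<psi> \<in> borel_measurable borel"
    unfolding \<psi>_def using assms(1) by (intro borel_measurable_continuous_on_if) auto
  then have "(\<lambda>x. \<psi> (h x)) \<in> borel_measurable M"
    using assms(2) by measurable
  moreover have "\<psi> (h x) = \<phi> (h x)" if "x \<in> space M" for x
    using assms(3)[OF that] by (cases "h x = 0") (auto simp: \<psi>_def)
  ultimately show ?thesis
    by (rule measurable_cong[THEN iffD1, rotated])
qed

lemma continuous_on_integral_dominated:
  fixes h :: "'a::{first_countable_topology, t2_space} \<Rightarrow> 'b \<Rightarrow> 'c::{banach, second_countable_topology}"
  assumes meas: "\<And>s. s \<in> A \<Longrightarrow> h s \<in> borel_measurable M"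
    and w: "integrable M w"
    and bound: "\<And>s. s \<in> A \<Longrightarrow> AE x in M. norm (h s x) \<le> w x"
    and cont: "AE x in M. continuous_on A (\<lambda>s. h s x)"
  shows "continuous_on A (\<lambda>s. \<integral>x. h s x \<partial>M)"
proof (rule continuous_on_sequentiallyI)
  fix u a assume u: "\<forall>n. u n \<in> A" "a \<in> A" "u \<longlonglongrightarrow> a"
  show "(\<lambda>n. \<integral>x. h (u n) x \<partial>M) \<longlonglongrightarrow> (\<integral>x. h a x \<partial>M)"
  proof (rule integral_dominated_convergence[OF _ _ w])
    show "h a \<in> borel_measurable M" "\<And>n. h (u n) \<in> borel_measurable M"
      using meas u by auto
    show "\<And>n. AE x in M. norm (h (u n) x) \<le> w x"
      using bound u by auto
    show "AE x in M. (\<lambda>n. h (u n) x) \<longlonglongrightarrow> h a x"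
      using cont by eventually_elim (use u in \<open>auto intro: continuous_on_tendsto_compose\<close>)
  qed
qed

lemma abs_du_diff_le_rho:
  assumes "c1 \<in> classC du" "c2 \<in> classC du" "0 < w"
  shows "\<bar>du (c1 w z) z - du (c2 w z) z\<bar> \<le> rho du c1 c2"
proof -
  obtain M1 where M1: "\<And>w z. 0 < w \<Longrightarrow> \<bar>du (c1 w z) z - du w z\<bar> \<le> M1"
    using assms(1) unfolding classC_def by blast
  obtain M2 where M2: "\<And>w z. 0 < w \<Longrightarrow> \<bar>du (c2 w z) z - du w z\<bar> \<le> M2"
    using assms(2) unfolding classC_def by blast
  have "bdd_above ((\<lambda>p. \<bar>du (c1 (fst p) (snd p)) (snd p) - du (c2 (fst p) (snd p)) (snd p)\<bar>)
      ` ({0<..} \<times> UNIV))"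
  proof (rule bdd_aboveI2)
    fix p :: "real \<times> 'a" assume "p \<in> {0<..} \<times> UNIV"
    then show "\<bar>du (c1 (fst p) (snd p)) (snd p) - du (c2 (fst p) (snd p)) (snd p)\<bar> \<le> M1 + M2"
      using M1[of "fst p" "snd p"] M2[of "fst p" "snd p"] by auto
  qed
  then show ?thesis
    unfolding rho_def by (rule cSUP_upper2[of _ _ "(w, z)"]) (use assms(3) in auto)
qed

lemma classC0_closed:
  assumes du: "\<And>z. strict_antimono_on {0<..} (\<lambda>x. du x z)"
    and c: "c \<in> classC du" and approx: "\<forall>\<epsilon>>0. \<exists>c' \<in> classC0 du. rho du c' c < \<epsilon>"
  shows "c \<in> classC0 du"
proof -
  have "\<forall>n. \<exists>c' \<in> classC0 du. rho du c' c < inverse (real (Suc n))"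
    using approx by simp
  then obtain cs where cs: "\<And>n. cs n \<in> classC0 du" "\<And>n. rho du (cs n) c < inverse (real (Suc n))"
    by metis
  then have cs_C: "\<And>n. cs n \<in> classC du"
    unfolding classC0_def by blast
  have pointwise: "(\<lambda>n. cs n w z) \<longlonglongrightarrow> c w z" if "0 < w" for w z
  proof (rule strict_antimono_on_tendsto_imp_tendsto[OF du])
    show "c w z \<in> {0<..}" "\<And>n. cs n w z \<in> {0<..}"
      using c cs_C \<open>0 < w\<close> unfolding classC_def by auto
    have "\<bar>du (cs n w z) z - du (c w z) z\<bar> \<le> inverse (real (Suc n))" for n
      using abs_du_diff_le_rho[OF cs_C c \<open>0 < w\<close>, of n z] cs(2)[of n] by linarith
    then have "(\<lambda>n. du (cs n w z) z - du (c w z) z) \<longlonglongrightarrow> 0"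
      by (intro Lim_null_comparison[OF always_eventually LIMSEQ_inverse_real_of_nat]) simp
    then show "(\<lambda>n. du (cs n w z) z) \<longlonglongrightarrow> du (c w z) z"
      by (rule LIM_zero_cancel)
  qed simp
  have "mono_on {0<..} (\<lambda>w. w - c w z)" for z
  proof (rule mono_on_pointwise_limit[where g = "\<lambda>n w. w - cs n w z"])
    show "mono_on {0<..} (\<lambda>w. w - cs n w z)" for n
      using cs(1)[of n] unfolding classC0_def by blast
    show "(\<lambda>n. w - cs n w z) \<longlonglongrightarrow> w - c w z" if "w \<in> {0<..}" for w
      using pointwise[of w z] that by (intro tendsto_diff tendsto_const) auto
  qed
  with c show ?thesis
    unfolding classC0_def by blast
qed

definition euler_root :: "(real \<Rightarrow> real) \<Rightarrow> (real \<Rightarrow> real) \<Rightarrow> real \<Rightarrow> real" where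
  "euler_root f g w = (THE \<xi>. 0 < \<xi> \<and> \<xi> \<le> w \<and> f \<xi> = max (g (w - \<xi>)) (f w))"

locale euler_equation =
  fixes f g :: "real \<Rightarrow> real"
  assumes f_strict_antimono: "strict_antimono_on {0<..} f"
    and f_cont: "continuous_on {0<..} f"
    and f_at_0: "filterlim f at_top (at_right 0)"
    and g_antimono: "antimono_on {0..} g"
    and g_cont: "continuous_on {0..} g"
begin

lemma f_less: "0 < a \<Longrightarrow> a < b \<Longrightarrow> f b < f a"
  using monotone_onD[OF f_strict_antimono] by simp

lemma f_le: "0 < a \<Longrightarrow> a \<le> b \<Longrightarrow> f b \<le> f a"
  using f_less[of a b] by (cases "a = b") auto

lemma g_le: "0 \<le> a \<Longrightarrow> a \<le> b \<Longrightarrow> g b \<le> g a"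
  using monotone_onD[OF g_antimono] by simp

lemma euler_root_exists:
  assumes "0 < w"
  shows "\<exists>\<xi>. 0 < \<xi> \<and> \<xi> \<le> w \<and> f \<xi> = max (g (w - \<xi>)) (f w)"
proof -
  have "eventually (\<lambda>x. max (g 0) (f w) < f x) (at_right 0)"
    using f_at_0 unfolding filterlim_at_top_dense by blast
  then obtain b where b: "0 < b" "\<And>x. 0 < x \<Longrightarrow> x < b \<Longrightarrow> max (g 0) (f w) < f x"
    unfolding eventually_at_right_field by auto
  define a where "a = b / 2"
  have a: "0 < a" "max (g 0) (f w) < f a"
    using b unfolding a_def by auto
  then have "a < w"
    using f_le[OF \<open>0 < w\<close>, of a] by force
  define h where "h \<xi> = f \<xi> - max (g (w - \<xi>)) (f w)" for \<xi>
  have "\<exists>\<xi>. a \<le> \<xi> \<and> \<xi> \<le> w \<and> h \<xi> = 0"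
  proof (rule IVT2')
    show "h w \<le> 0" "a \<le> w"
      using \<open>a < w\<close> by (auto simp: h_def)
    have "g (w - a) \<le> g 0"
      using \<open>a < w\<close> by (intro g_le) auto
    then show "0 \<le> h a"
      using a by (auto simp: h_def)
    have "continuous_on {a..w} f"
      by (rule continuous_on_subset[OF f_cont]) (use a in auto)
    moreover have "continuous_on {a..w} (\<lambda>\<xi>. g (w - \<xi>))"
      by (rule continuous_on_compose2[OF g_cont continuous_on_diff[OF continuous_on_const continuous_on_id]])
        auto
    ultimately show "continuous_on {a..w} h"
      unfolding h_def by (intro continuous_on_diff continuous_on_max continuous_on_const)
  qed
  then obtain \<xi> where "a \<le> \<xi>" "\<xi> \<le> w" "h \<xi> = 0"
    by blast
  then show ?thesis
    using a by (intro exI[of _ \<xi>]) (auto simp: h_def)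
qed

lemma euler_root_unique:
  assumes "0 < \<xi>1" "\<xi>1 \<le> w" "f \<xi>1 = max (g (w - \<xi>1)) (f w)"
    and "0 < \<xi>2" "\<xi>2 \<le> w" "f \<xi>2 = max (g (w - \<xi>2)) (f w)"
  shows "\<xi>1 = \<xi>2"
proof (rule ccontr)
  assume "\<xi>1 \<noteq> \<xi>2"
  then consider "\<xi>1 < \<xi>2" | "\<xi>2 < \<xi>1"
    by linarith
  then show False
  proof cases
    case 1
    then have "g (w - \<xi>1) \<le> g (w - \<xi>2)"
      using assms by (intro g_le) auto
    then show False
      using f_less[OF \<open>0 < \<xi>1\<close> 1] assms(3,6) by linarith
  next
    case 2
    then have "g (w - \<xi>2) \<le> g (w - \<xi>1)"
      using assms by (intro g_le) auto
    then show False
      using f_less[OF \<open>0 < \<xi>2\<close> 2] assms(3,6) by linarith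
  qed
qed

lemma euler_root:
  assumes "0 < w"
  shows "0 < euler_root f g w" "euler_root f g w \<le> w"
    and "f (euler_root f g w) = max (g (w - euler_root f g w)) (f w)"
proof -
  have "\<exists>!\<xi>. 0 < \<xi> \<and> \<xi> \<le> w \<and> f \<xi> = max (g (w - \<xi>)) (f w)"
    using euler_root_exists[OF assms] euler_root_unique by blast
  from theI'[OF this] show "0 < euler_root f g w" "euler_root f g w \<le> w"
    and "f (euler_root f g w) = max (g (w - euler_root f g w)) (f w)"
    unfolding euler_root_def by auto
qed

lemma euler_root_mono:
  assumes "0 < w1" "w1 \<le> w2"
  shows "euler_root f g w1 \<le> euler_root f g w2"
proof (rule ccontr)
  define \<xi>1 \<xi>2 where "\<xi>1 = euler_root f g w1" and "\<xi>2 = euler_root f g w2"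
  note root1 = euler_root[OF \<open>0 < w1\<close>, folded \<xi>1_def]
    and root2 = euler_root[of w2, folded \<xi>2_def]
  assume "\<not> ?thesis"
  then have "\<xi>2 < \<xi>1"
    by (simp add: \<xi>1_def \<xi>2_def)
  then have "g (w2 - \<xi>2) \<le> g (w1 - \<xi>1)"
    using root1 assms by (intro g_le) auto
  moreover have "f w2 \<le> f w1"
    using f_le assms by blast
  moreover have "f \<xi>1 < f \<xi>2"
    using f_less[of \<xi>2 \<xi>1] root2 \<open>\<xi>2 < \<xi>1\<close> assms by auto
  ultimately show False
    using root1(3) root2(3) assms by auto
qed

lemma euler_root_savings_mono:
  assumes "0 < w1" "w1 \<le> w2"
  shows "w1 - euler_root f g w1 \<le> w2 - euler_root f g w2"
proof (rule ccontr)
  define \<xi>1 \<xi>2 where "\<xi>1 = euler_root f g w1" and "\<xi>2 = euler_root f g w2"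
  note root1 = euler_root[OF \<open>0 < w1\<close>, folded \<xi>1_def]
    and root2 = euler_root[of w2, folded \<xi>2_def]
  assume "\<not> ?thesis"
  then have less: "w2 - \<xi>2 < w1 - \<xi>1"
    by (simp add: \<xi>1_def \<xi>2_def)
  then have "g (w1 - \<xi>1) \<le> g (w2 - \<xi>2)"
    using root2 assms by (intro g_le) auto
  moreover have "f w1 < f \<xi>1"
    using f_less[of \<xi>1 w1] root1 root2 less assms by auto
  moreover have "f \<xi>2 < f \<xi>1"
    using f_less[of \<xi>1 \<xi>2] root1 less assms by auto
  ultimately show False
    using root1(3) root2(3) assms by auto
qed

lemma euler_root_lipschitz: "1-lipschitz_on {0<..} (euler_root f g)"
proof (rule lipschitz_onI)
  fix w1 w2 :: real assume "w1 \<in> {0<..}" "w2 \<in> {0<..}"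
  then show "dist (euler_root f g w1) (euler_root f g w2) \<le> 1 * dist w1 w2"
    using euler_root_mono[of w1 w2] euler_root_savings_mono[of w1 w2]
      euler_root_mono[of w2 w1] euler_root_savings_mono[of w2 w1]
    by (cases "w1 \<le> w2") (auto simp: dist_real_def)
qed simp

lemma euler_root_marginal_bounds:
  assumes "0 < w"
  shows "f w \<le> f (euler_root f g w)" "f (euler_root f g w) \<le> max (g 0) (f w)"
  using euler_root[OF assms] g_le[of 0 "w - euler_root f g w"] by auto

end

locale income_fluctuation =
  fixes P :: "'z::finite \<Rightarrow> 'z \<Rightarrow> real"
    and Pe :: "'e measure"
    and beta R Y :: "'z \<Rightarrow> 'z \<Rightarrow> 'e \<Rightarrow> real"
    and du :: "real \<Rightarrow> 'z \<Rightarrow> real"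
  assumes P_nonneg: "\<And>z zh. 0 \<le> P z zh"
    and meas: "\<And>z zh. (\<lambda>e. beta z zh e) \<in> borel_measurable Pe"
              "\<And>z zh. (\<lambda>e. R z zh e) \<in> borel_measurable Pe"
              "\<And>z zh. (\<lambda>e. Y z zh e) \<in> borel_measurable Pe"
    and nonneg: "\<And>z zh e. 0 \<le> beta z zh e" "\<And>z zh e. 0 \<le> R z zh e" "\<And>z zh e. 0 \<le> Y z zh e"
    and du_strict_antimono: "\<And>z. strict_antimono_on {0<..} (\<lambda>x. du x z)"
    and du_cont: "\<And>z. continuous_on {0<..} (\<lambda>x. du x z)"
    and du_pos: "\<And>c z. 0 < c \<Longrightarrow> 0 < du c z"
    and du_inada0: "\<And>z. filterlim (\<lambda>c. du c z) at_top (at_right 0)"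
    and Y_pos: "\<And>z zh. 0 < P z zh \<Longrightarrow> AE e in Pe. 0 < Y z zh e"
    and A2a2: "\<And>z zh. 0 < P z zh \<Longrightarrow>
                 integrable Pe (\<lambda>e. beta z zh e * R z zh e * du (Y z zh e) zh)"
    and K_int: "\<And>z zh. 0 < P z zh \<Longrightarrow> integrable Pe (\<lambda>e. beta z zh e * R z zh e)"
begin

definition euler_integrand :: "(real \<Rightarrow> 'z \<Rightarrow> real) \<Rightarrow> 'z \<Rightarrow> 'z \<Rightarrow> real \<Rightarrow> 'e \<Rightarrow> real" where
  "euler_integrand c z zh s e = beta z zh e * R z zh e * du (c (R z zh e * s + Y z zh e) zh) zh"

definition euler_expectation :: "(real \<Rightarrow> 'z \<Rightarrow> real) \<Rightarrow> 'z \<Rightarrow> real \<Rightarrow> real" where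
  "euler_expectation c z s = Ez P Pe z (\<lambda>zh. euler_integrand c z zh s)"

lemma Top_eq_euler_root:
  "Top P Pe beta R Y du c w z = euler_root (\<lambda>x. du x z) (euler_expectation c z) w"
  by (simp add: Top_def euler_root_def euler_expectation_def euler_integrand_def[abs_def])

lemma du_le: "0 < a \<Longrightarrow> a \<le> b \<Longrightarrow> du b z \<le> du a z"
  using monotone_onD[OF du_strict_antimono, of a b z] by (cases "a = b") auto

context
  fixes c assumes c: "c \<in> classC du"
begin

lemma c_pos: "0 < w \<Longrightarrow> 0 < c w z"
  using c unfolding classC_def by blast

lemma du_c_continuous: "continuous_on {0<..} (\<lambda>t. du (c t zh) zh)"
  using c c_pos unfolding classC_def
  by (intro continuous_on_compose2[OF du_cont]) auto

lemma euler_integrand_measurable: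
  assumes "0 \<le> s"
  shows "euler_integrand c z zh s \<in> borel_measurable Pe"
proof -
  \<comment> \<open>R s + Y may vanish, and c is arbitrary (possibly non-measurable) off (0,inf)\<close>
  have "(\<lambda>e. du (c (R z zh e * s + Y z zh e) zh) zh) \<in> borel_measurable Pe"
    using meas nonneg assms by (intro borel_measurable_continuous_on_pos_compose[OF du_c_continuous]) auto
  then show ?thesis
    unfolding euler_integrand_def using meas by measurable
qed

lemma euler_integrand_nonneg_antimono:
  assumes "0 < Y z zh e" "0 \<le> s" "s \<le> s'"
  shows "0 \<le> euler_integrand c z zh s' e" "euler_integrand c z zh s' e \<le> euler_integrand c z zh s e"
proof -
  have "R z zh e * s \<le> R z zh e * s'" "0 \<le> R z zh e * s"
    using nonneg(2)[of z zh e] assms by (auto intro: mult_left_mono)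
  then have t: "0 < R z zh e * s + Y z zh e" "R z zh e * s + Y z zh e \<le> R z zh e * s' + Y z zh e"
    using assms by auto
  then have "c (R z zh e * s + Y z zh e) zh \<le> c (R z zh e * s' + Y z zh e) zh"
    using c t unfolding classC_def by (auto intro: mono_onD)
  then have "du (c (R z zh e * s' + Y z zh e) zh) zh \<le> du (c (R z zh e * s + Y z zh e) zh) zh"
    by (rule du_le[OF c_pos[OF t(1)]])
  moreover have "0 < du (c (R z zh e * s' + Y z zh e) zh) zh"
    using t by (intro du_pos c_pos) auto
  ultimately show "0 \<le> euler_integrand c z zh s' e" "euler_integrand c z zh s' e \<le> euler_integrand c z zh s e"
    unfolding euler_integrand_def using nonneg by (auto intro: mult_left_mono)
qed

lemma euler_integrand_integrable_0:
  assumes "0 < P z zh"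
  shows "integrable Pe (euler_integrand c z zh 0)"
proof -
  obtain M where M: "\<And>w z. 0 < w \<Longrightarrow> \<bar>du (c w z) z - du w z\<bar> \<le> M"
    using c unfolding classC_def by blast
  let ?bound = "\<lambda>e. beta z zh e * R z zh e * du (Y z zh e) zh + M * (beta z zh e * R z zh e)"
  show ?thesis
  proof (rule Bochner_Integration.integrable_bound)
    show "integrable Pe ?bound"
      using A2a2 K_int assms by auto
    show "euler_integrand c z zh 0 \<in> borel_measurable Pe"
      by (rule euler_integrand_measurable) simp
    show "AE e in Pe. norm (euler_integrand c z zh 0 e) \<le> norm (?bound e)"
      using Y_pos[OF assms]
    proof eventually_elim
      case (elim e)
      have "du (c (Y z zh e) zh) zh \<le> du (Y z zh e) zh + M"
        using M[OF elim, of zh] by linarith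
      then have "euler_integrand c z zh 0 e \<le> beta z zh e * R z zh e * (du (Y z zh e) zh + M)"
        unfolding euler_integrand_def using nonneg[of z zh e] by (simp add: mult_left_mono)
      also have "\<dots> = ?bound e"
        by (simp add: algebra_simps)
      finally have "euler_integrand c z zh 0 e \<le> ?bound e" .
      moreover have "0 \<le> euler_integrand c z zh 0 e"
        using euler_integrand_nonneg_antimono(1)[OF elim order_refl order_refl] .
      ultimately show ?case
        by simp
    qed
  qed
qed

lemma euler_integrand_dominated:
  assumes "0 < P z zh" "0 \<le> s"
  shows "AE e in Pe. norm (euler_integrand c z zh s e) \<le> euler_integrand c z zh 0 e"
  using Y_pos[OF assms(1)]
  by eventually_elim (use euler_integrand_nonneg_antimono[OF _ order_refl assms(2)] in auto)

lemma euler_integrand_integrable: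
  assumes "0 < P z zh" "0 \<le> s"
  shows "integrable Pe (euler_integrand c z zh s)"
  using euler_integrand_measurable euler_integrand_dominated[OF assms] assms
  by (intro Bochner_Integration.integrable_bound[OF euler_integrand_integrable_0[OF assms(1)]]) auto

lemma integral_euler_integrand_antimono:
  assumes "0 < P z zh" "0 \<le> s" "s \<le> s'"
  shows "(\<integral>e. euler_integrand c z zh s' e \<partial>Pe) \<le> (\<integral>e. euler_integrand c z zh s e \<partial>Pe)"
proof (rule integral_mono_AE)
  show "integrable Pe (euler_integrand c z zh s')" "integrable Pe (euler_integrand c z zh s)"
    using euler_integrand_integrable assms by auto
  show "AE e in Pe. euler_integrand c z zh s' e \<le> euler_integrand c z zh s e"
    using Y_pos[OF assms(1)] by eventually_elim (rule euler_integrand_nonneg_antimono(2)[OF _ assms(2,3)])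
qed

lemma integral_euler_integrand_continuous:
  assumes "0 < P z zh"
  shows "continuous_on {0..} (\<lambda>s. \<integral>e. euler_integrand c z zh s e \<partial>Pe)"
proof (rule continuous_on_integral_dominated[where w = "euler_integrand c z zh 0"])
  show "AE e in Pe. continuous_on {0..} (\<lambda>s. euler_integrand c z zh s e)"
    using Y_pos[OF assms]
  proof eventually_elim
    case (elim e)
    have "(\<lambda>s. R z zh e * s + Y z zh e) ` {0..} \<subseteq> {0<..}"
      using elim nonneg(2)[of z zh e] by (auto intro: add_nonneg_pos)
    then have "continuous_on {0..} (\<lambda>s. du (c (R z zh e * s + Y z zh e) zh) zh)"
      by (intro continuous_on_compose2[OF du_c_continuous] continuous_intros)
    then show ?case
      unfolding euler_integrand_def by (intro continuous_intros)
  qed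
qed (use euler_integrand_measurable euler_integrand_integrable_0 euler_integrand_dominated assms in auto)

lemma euler_expectation_antimono: "antimono_on {0..} (euler_expectation c z)"
proof (rule monotone_onI)
  fix s s' :: real assume "s \<in> {0..}" "s' \<in> {0..}" "s \<le> s'"
  then show "euler_expectation c z s' \<le> euler_expectation c z s"
    unfolding euler_expectation_def Ez_def
  proof (intro sum_mono)
    fix zh
    show "P z zh * (\<integral>e. euler_integrand c z zh s' e \<partial>Pe)
        \<le> P z zh * (\<integral>e. euler_integrand c z zh s e \<partial>Pe)"
      using integral_euler_integrand_antimono[of z zh s s'] P_nonneg[of z zh] \<open>s \<in> {0..}\<close> \<open>s \<le> s'\<close>
      by (cases "P z zh = 0") (auto intro: mult_left_mono)
  qed
qed

lemma euler_expectation_continuous: "continuous_on {0..} (euler_expectation c z)"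
  unfolding euler_expectation_def Ez_def
proof (intro continuous_on_sum)
  fix zh
  show "continuous_on {0..} (\<lambda>s. P z zh * (\<integral>e. euler_integrand c z zh s e \<partial>Pe))"
    using integral_euler_integrand_continuous P_nonneg[of z zh]
    by (cases "P z zh = 0") (auto intro: continuous_on_mult_left)
qed

lemma euler_equation_expectation: "euler_equation (\<lambda>x. du x z) (euler_expectation c z)"
  by unfold_locales
    (rule du_strict_antimono du_cont du_inada0 euler_expectation_antimono euler_expectation_continuous)+

end

lemma Top_in_classC0:
  assumes c: "c \<in> classC du"
  shows "Top P Pe beta R Y du c \<in> classC0 du"
proof -
  let ?T = "Top P Pe beta R Y du c"
  note root = euler_equation_expectation[OF c]
  have "continuous_on {0<..} (\<lambda>w. ?T w z)" for z
    unfolding Top_eq_euler_root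
    by (rule lipschitz_on_continuous_on[OF euler_equation.euler_root_lipschitz[OF root]])
  moreover have "mono_on {0<..} (\<lambda>w. ?T w z)" for z
    unfolding Top_eq_euler_root by (intro mono_onI euler_equation.euler_root_mono[OF root]) auto
  moreover have "mono_on {0<..} (\<lambda>w. w - ?T w z)" for z
    unfolding Top_eq_euler_root by (intro mono_onI euler_equation.euler_root_savings_mono[OF root]) auto
  moreover have "0 < ?T w z" "?T w z \<le> w" if "0 < w" for w z
    unfolding Top_eq_euler_root using euler_equation.euler_root[OF root that] by auto
  moreover have "\<bar>du (?T w z) z - du w z\<bar> \<le> (\<Sum>z\<in>UNIV. \<bar>euler_expectation c z 0\<bar>)" if "0 < w" for w z
  proof -
    have "\<bar>euler_expectation c z 0\<bar> \<le> (\<Sum>z\<in>UNIV. \<bar>euler_expectation c z 0\<bar>)"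
      by (rule member_le_sum) auto
    then show ?thesis
      unfolding Top_eq_euler_root
      using euler_equation.euler_root_marginal_bounds[OF root that, of z] du_pos[OF that, of z]
      by (cases "euler_expectation c z 0 \<le> du w z") (auto simp: max_def)
  qed
  ultimately show ?thesis
    unfolding classC0_def classC_def by blast
qed

end

theorem lemmaB3:
  fixes P :: "'z::finite \<Rightarrow> 'z \<Rightarrow> real"
    and Pe :: "'e measure"
    and beta R Y :: "'z \<Rightarrow> 'z \<Rightarrow> 'e \<Rightarrow> real"
    and u du ddu :: "real \<Rightarrow> 'z \<Rightarrow> real"
  assumes P_nonneg: "\<And>z zh. 0 \<le> P z zh"
    and P_stoch: "\<And>z. (\<Sum>zh\<in>UNIV. P z zh) = 1"
    and pi_prob: "prob_space Pe"
    and meas: "\<And>z zh. (\<lambda>e. beta z zh e) \<in> borel_measurable Pe"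
              "\<And>z zh. (\<lambda>e. R z zh e) \<in> borel_measurable Pe"
              "\<And>z zh. (\<lambda>e. Y z zh e) \<in> borel_measurable Pe"
    and nonneg: "\<And>z zh e. 0 \<le> beta z zh e" "\<And>z zh e. 0 \<le> R z zh e" "\<And>z zh e. 0 \<le> Y z zh e"
    \<comment> \<open>Assumption 1\<close>
    and u_deriv: "\<And>c z. 0 < c \<Longrightarrow> ((\<lambda>x. u x z) has_real_derivative du c z) (at c)"
    and du_deriv: "\<And>c z. 0 < c \<Longrightarrow> ((\<lambda>x. du x z) has_real_derivative ddu c z) (at c)"
    and du_pos: "\<And>c z. 0 < c \<Longrightarrow> 0 < du c z"
    and ddu_neg: "\<And>c z. 0 < c \<Longrightarrow> ddu c z < 0"
    and du_inada0: "\<And>z. filterlim (\<lambda>c. du c z) at_top (at_right 0)"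
    and du_infty: "\<And>z. \<exists>L. L < 1 \<and> ((\<lambda>c. du c z) \<longlongrightarrow> L) at_top"
    \<comment> \<open>Assumption 2(a)\<close>
    and Y_pos: "\<And>z zh. 0 < P z zh \<Longrightarrow> AE e in Pe. 0 < Y z zh e"
    and A2a1: "\<And>z zh. 0 < P z zh \<Longrightarrow> integrable Pe (\<lambda>e. du (Y z zh e) zh)"
    and A2a2: "\<And>z zh. 0 < P z zh \<Longrightarrow>
                 integrable Pe (\<lambda>e. beta z zh e * R z zh e * du (Y z zh e) zh)"
    \<comment> \<open>Assumption 2(b)\<close>
    and K_int: "\<And>z zh. 0 < P z zh \<Longrightarrow> integrable Pe (\<lambda>e. beta z zh e * R z zh e)"
    and A2b: "spec_radius (\<chi> z zh. P z zh * (\<integral>e. beta z zh e * R z zh e \<partial>Pe)) < 1"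
  shows "(\<forall>c \<in> classC du. (\<forall>\<epsilon>>0. \<exists>c' \<in> classC0 du. rho du c' c < \<epsilon>) \<longrightarrow> c \<in> classC0 du)
       \<and> (\<forall>c \<in> classC0 du. Top P Pe beta R Y du c \<in> classC0 du)"
proof -
  have du_strict_antimono: "strict_antimono_on {0<..} (\<lambda>x. du x z)" for z
    using du_deriv ddu_neg by (rule deriv_neg_imp_strict_antimono_on)
  have du_cont: "continuous_on {0<..} (\<lambda>x. du x z)" for z
    by (rule continuous_at_imp_continuous_on) (auto intro: DERIV_isCont du_deriv)
  interpret income_fluctuation P Pe beta R Y du
    using P_nonneg meas nonneg du_strict_antimono du_cont du_pos du_inada0 Y_pos A2a2 K_int
    by unfold_locales
  show ?thesis
  proof (intro conjI ballI impI)
    fix c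
    assume "c \<in> classC du" "\<forall>\<epsilon>>0. \<exists>c' \<in> classC0 du. rho du c' c < \<epsilon>"
    then show "c \<in> classC0 du"
      by (rule classC0_closed[OF du_strict_antimono])
  next
    fix c
    assume "c \<in> classC0 du"
    then have "c \<in> classC du"
      unfolding classC0_def by blast
    then show "Top P Pe beta R Y du c \<in> classC0 du"
      by (rule Top_in_classC0)
  qed
qed

end
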